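(* Let $R$ be a commutative ring with identity and $M$ a finitely generated multiplication $R$-module. Then $$\sum_{a\in\sqrt{(0:M)}} a\Gamma_a(M)=\beta(M).$$
   Context: $M$ is a multiplication module if every submodule $N$ of $M$ is of the form $IM$ for some ideal $I$ of $R$. $(0:M)=\{r\in R\mid rM=0\}$ and $\sqrt{(0:M)}$ is its radical. For $a\in R$, $a\Gamma_{a}(M)=\{am \mid m\in M,\ a^{k}m=0 \text{ for some } k\in\mathbb{Z}^{+}\}$. A proper submodule $N$ of $M$ is prime if for all $r\in R$, $m\in M$, $rm\in N$ implies $m\in N$ or $rM\subseteq N$; $\beta(M)$ is the intersection of all prime submodules of $M$. *)

theory Defs
  imports Complex_Main
begin

(* R is the type 'a :: comm_ring_1, M is the whole type 'b with scalar multiplication sc,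
   assumed to satisfy the locale  module sc. Submodules are Modules.module.subspace sc. *)

definition is_ideal :: "'a::comm_ring_1 set \<Rightarrow> bool" where
  "is_ideal I \<longleftrightarrow> 0 \<in> I \<and> (\<forall>x\<in>I. \<forall>y\<in>I. x + y \<in> I) \<and> (\<forall>r. \<forall>x\<in>I. r * x \<in> I)"

definition ideal_mult :: "('a::comm_ring_1 \<Rightarrow> 'b::ab_group_add \<Rightarrow> 'b) \<Rightarrow> 'a set \<Rightarrow> 'b set" where
  "ideal_mult sc I = Modules.module.span sc {sc r m | r m. r \<in> I}"

definition finitely_generated_module :: "('a::comm_ring_1 \<Rightarrow> 'b::ab_group_add \<Rightarrow> 'b) \<Rightarrow> bool" where
  "finitely_generated_module sc \<longleftrightarrow> (\<exists>S. finite S \<and> Modules.module.span sc S = UNIV)"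

definition multiplication_module :: "('a::comm_ring_1 \<Rightarrow> 'b::ab_group_add \<Rightarrow> 'b) \<Rightarrow> bool" where
  "multiplication_module sc \<longleftrightarrow>
     (\<forall>N. Modules.module.subspace sc N \<longrightarrow> (\<exists>I. is_ideal I \<and> N = ideal_mult sc I))"

definition annihilator :: "('a::comm_ring_1 \<Rightarrow> 'b::ab_group_add \<Rightarrow> 'b) \<Rightarrow> 'a set" where
  "annihilator sc = {r. \<forall>m. sc r m = 0}"

definition radical :: "'a::comm_ring_1 set \<Rightarrow> 'a set" where
  "radical I = {r. \<exists>n. r ^ n \<in> I}"

definition aGamma :: "('a::comm_ring_1 \<Rightarrow> 'b::ab_group_add \<Rightarrow> 'b) \<Rightarrow> 'a \<Rightarrow> 'b set" where
  "aGamma sc a = {sc a m | m. \<exists>k::nat. k > 0 \<and> sc (a ^ k) m = 0}"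

definition prime_submodule :: "('a::comm_ring_1 \<Rightarrow> 'b::ab_group_add \<Rightarrow> 'b) \<Rightarrow> 'b set \<Rightarrow> bool" where
  "prime_submodule sc N \<longleftrightarrow> Modules.module.subspace sc N \<and> N \<noteq> UNIV \<and>
     (\<forall>r m. sc r m \<in> N \<longrightarrow> m \<in> N \<or> (\<forall>x. sc r x \<in> N))"

(* beta(M): intersection of all prime submodules (= M if there are none) *)
definition beta_module :: "('a::comm_ring_1 \<Rightarrow> 'b::ab_group_add \<Rightarrow> 'b) \<Rightarrow> 'b set" where
  "beta_module sc = \<Inter> {N. prime_submodule sc N}"

definition sum_submodules :: "('a::comm_ring_1 \<Rightarrow> 'b::ab_group_add \<Rightarrow> 'b) \<Rightarrow> 'b set set \<Rightarrow> 'b set" where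
  "sum_submodules sc F = Modules.module.span sc (\<Union> F)"

end

theory Submission
  imports Defs
begin

(* Every a in the radical of (0:M) is nilpotent on M, so a Gamma_a(M) = aM and the sum on the
   left is just (sqrt (0:M)) M.  A prime submodule P contains aM, because a^n M = 0 is contained
   in P and primeness peels off one factor a at a time.  Conversely, if m lies in beta(M) write
   Rm = IM; if I is not contained in the radical, pick c in I with no power of c annihilating M.
   Since M is finitely generated, Zorn's lemma gives a submodule P maximal among those not
   containing any c^n M, and such a maximal P is prime.  Then m is in P, so cM is contained in
   Rm and hence in P, a contradiction; thus I lies in the radical and Rm in (sqrt (0:M)) M. *)

context module
begin

lemma scale_span_in_subspace:
  assumes "subspace T" and "(\<lambda>s. r *s s) ` S \<subseteq> T" and "x \<in> span S"
  shows "r *s x \<in> T"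
proof -
  have "r *s x \<in> span ((\<lambda>s. r *s s) ` S)"
    using module_hom.span_image[OF module_hom_scale_self] assms(3) by blast
  then show ?thesis
    using span_minimal[OF assms(2,1)] by blast
qed

lemma subspace_Union_chain:
  assumes "\<C> \<noteq> {}" and "subset.chain \<A> \<C>" and "\<And>P. P \<in> \<A> \<Longrightarrow> subspace P"
  shows "subspace (\<Union>\<C>)"
proof (rule subspaceI)
  have sub: "\<And>P. P \<in> \<C> \<Longrightarrow> subspace P"
    using assms unfolding subset.chain_def by blast
  show "0 \<in> \<Union>\<C>" using assms(1) sub subspace_0 by blast
  show "c *s x \<in> \<Union>\<C>" if "x \<in> \<Union>\<C>" for c x using that sub subspace_scale by blast
  show "x + y \<in> \<Union>\<C>" if xy: "x \<in> \<Union>\<C>" "y \<in> \<Union>\<C>" for x y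
  proof -
    obtain X Y where XY: "X \<in> \<C>" "Y \<in> \<C>" "x \<in> X" "y \<in> Y"
      using xy by blast
    then have "X \<subseteq> Y \<or> Y \<subseteq> X"
      using assms(2) unfolding subset.chain_def by blast
    then show ?thesis using XY sub subspace_add by blast
  qed
qed

lemma radical_annihilator_nilpotent:
  assumes "a \<in> radical (annihilator scale)"
  obtains n where "n > 0" and "\<And>x. (a ^ n) *s x = 0"
proof -
  obtain n where "\<And>x. (a ^ n) *s x = 0"
    using assms unfolding radical_def annihilator_def by blast
  then have "\<And>x. (a ^ Suc n) *s x = 0"
    by (metis power_Suc2 scale_scale scale_zero_right)
  then show ?thesis using that by blast
qed

lemma aGamma_radical_annihilator:
  assumes "a \<in> radical (annihilator scale)"
  shows "aGamma scale a = range (\<lambda>x. a *s x)"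
proof -
  obtain n where "n > 0" and "\<And>x. (a ^ n) *s x = 0"
    using radical_annihilator_nilpotent[OF assms] by blast
  then show ?thesis unfolding aGamma_def by auto
qed

lemma sum_submodules_aGamma_radical_annihilator:
  "sum_submodules scale (aGamma scale ` radical (annihilator scale))
     = ideal_mult scale (radical (annihilator scale))"
proof -
  have "\<Union> (aGamma scale ` radical (annihilator scale))
          = {r *s m | r m. r \<in> radical (annihilator scale)}"
    by (auto simp: aGamma_radical_annihilator)
  then show ?thesis unfolding sum_submodules_def ideal_mult_def by simp
qed

lemma prime_submodule_scale_of_power:
  assumes P: "prime_submodule scale P" and "\<And>x. (a ^ j) *s x \<in> P"
  shows "a *s x \<in> P"
  using assms(2)
proof (induction j arbitrary: x)
  case 0
  then show ?case by simp
next
  case (Suc j)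
  show ?case
  proof (cases "\<forall>y. (a ^ j) *s y \<in> P")
    case True
    then show ?thesis using Suc.IH by blast
  next
    case False
    then obtain y where y: "(a ^ j) *s y \<notin> P" by blast
    have "a *s ((a ^ j) *s y) \<in> P" using Suc.prems by (simp add: power_Suc)
    then show ?thesis using P y unfolding prime_submodule_def by blast
  qed
qed

lemma ideal_mult_radical_annihilator_subset_beta_module:
  "ideal_mult scale (radical (annihilator scale)) \<subseteq> beta_module scale"
  unfolding beta_module_def
proof (rule Inter_greatest)
  fix P assume "P \<in> {N. prime_submodule scale N}"
  then have P: "prime_submodule scale P" by simp
  then have "subspace P" unfolding prime_submodule_def by blast
  have "a *s x \<in> P" if a: "a \<in> radical (annihilator scale)" for a x
  proof -
    obtain n where "\<And>x. (a ^ n) *s x = 0"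
      using a unfolding radical_def annihilator_def by blast
    moreover have "0 \<in> P" using \<open>subspace P\<close> by (rule subspace_0)
    ultimately have "\<And>x. (a ^ n) *s x \<in> P" by simp
    then show ?thesis by (rule prime_submodule_scale_of_power[OF P])
  qed
  then have "{r *s m | r m. r \<in> radical (annihilator scale)} \<subseteq> P" by blast
  then show "ideal_mult scale (radical (annihilator scale)) \<subseteq> P"
    unfolding ideal_mult_def using \<open>subspace P\<close> by (rule span_minimal)
qed

lemma Union_chain_avoids_powers:
  assumes fin: "finite S" and span: "span S = UNIV" and ne: "\<C> \<noteq> {}"
    and chain: "subset.chain {P. subspace P \<and> (\<forall>n. \<exists>x. (c ^ n) *s x \<notin> P)} \<C>"
  shows "\<exists>x. (c ^ n) *s x \<notin> \<Union>\<C>"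
proof (rule ccontr)
  (* Finite generation enters here: c^n M is generated by the finitely many c^n s, s in S,
     and these already lie in a single member of the chain. *)
  assume "\<not> (\<exists>x. (c ^ n) *s x \<notin> \<Union>\<C>)"
  then have "(\<lambda>s. (c ^ n) *s s) ` S \<subseteq> \<Union>\<C>" by blast
  with fin obtain B where B: "B \<in> \<C>" "(\<lambda>s. (c ^ n) *s s) ` S \<subseteq> B"
    using finite_subset_Union_chain[OF _ _ ne chain] by blast
  have "B \<in> {P. subspace P \<and> (\<forall>n. \<exists>x. (c ^ n) *s x \<notin> P)}"
    using B(1) chain unfolding subset.chain_def by blast
  then have "subspace B" and "\<exists>x. (c ^ n) *s x \<notin> B" by simp_all
  moreover have "(c ^ n) *s x \<in> B" for x
    using scale_span_in_subspace[OF \<open>subspace B\<close> B(2)] span by blast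
  ultimately show False by blast
qed

lemma maximal_powers_avoiding_subspace_prime:
  assumes sub: "subspace P" and avoids: "\<And>n. \<exists>x. (c ^ n) *s x \<notin> P"
    and max: "\<And>Q. subspace Q \<Longrightarrow> (\<forall>n. \<exists>x. (c ^ n) *s x \<notin> Q) \<Longrightarrow> P \<subseteq> Q \<Longrightarrow> Q = P"
  shows "prime_submodule scale P"
  unfolding prime_submodule_def
proof (intro conjI allI impI)
  show "subspace P" by (fact sub)
  show "P \<noteq> UNIV" using avoids[of 0] by auto
  fix r m assume rm: "r *s m \<in> P"
  show "m \<in> P \<or> (\<forall>x. r *s x \<in> P)"
  proof (rule ccontr)
    assume "\<not> (m \<in> P \<or> (\<forall>x. r *s x \<in> P))"
    then obtain y where m: "m \<notin> P" and y: "r *s y \<notin> P" by blast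
    (* By maximality P + Rm contains some c^n M and P + rM some c^k M; since r(P + Rm) is in P,
       c^(n+k) M lies in c^n (P + rM), which is in P. *)
    have absorbs: "\<exists>n. \<forall>x. (c ^ n) *s x \<in> span (P \<union> T)" if T: "\<not> T \<subseteq> P" for T
    proof -
      have "P \<union> T \<subseteq> span (P \<union> T)" by (rule span_superset)
      then have "span (P \<union> T) \<noteq> P" and "P \<subseteq> span (P \<union> T)" using T by blast+
      then show ?thesis using max[of "span (P \<union> T)"] by blast
    qed
    obtain n where n: "\<And>x. (c ^ n) *s x \<in> span (P \<union> {m})"
      using absorbs[of "{m}"] m by blast
    obtain k where k: "\<And>x. (c ^ k) *s x \<in> span (P \<union> range (\<lambda>x. r *s x))"
      using absorbs[of "range (\<lambda>x. r *s x)"] y by blast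
    have r_absorbs: "r *s v \<in> P" if v: "v \<in> span (P \<union> {m})" for v
    proof (rule scale_span_in_subspace[OF sub _ v])
      show "(\<lambda>s. r *s s) ` (P \<union> {m}) \<subseteq> P"
        using rm subspace_scale[OF sub] by (auto intro: image_subsetI)
    qed
    have c_absorbs: "(c ^ n) *s w \<in> P" if w: "w \<in> span (P \<union> range (\<lambda>x. r *s x))" for w
    proof (rule scale_span_in_subspace[OF sub _ w])
      have "(c ^ n) *s (r *s x) \<in> P" for x
        using r_absorbs[OF n[of x]] by (simp add: mult.commute)
      then show "(\<lambda>s. (c ^ n) *s s) ` (P \<union> range (\<lambda>x. r *s x)) \<subseteq> P"
        using subspace_scale[OF sub] by (auto intro: image_subsetI)
    qed
    have "(c ^ (n + k)) *s x \<in> P" for x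
      using c_absorbs[OF k[of x]] by (simp add: power_add)
    then show False using avoids[of "n + k"] by blast
  qed
qed

lemma exists_prime_submodule_avoiding_powers:
  assumes "finite S" and "span S = UNIV" and "\<And>n. \<exists>x. (c ^ n) *s x \<noteq> 0"
  obtains P where "prime_submodule scale P" and "\<And>n. \<exists>x. (c ^ n) *s x \<notin> P"
proof -
  define F where "F = {P. subspace P \<and> (\<forall>n. \<exists>x. (c ^ n) *s x \<notin> P)}"
  have "{0} \<in> F" unfolding F_def using assms(3) by auto
  moreover have "\<Union>\<C> \<in> F" if "\<C> \<noteq> {}" and "subset.chain F \<C>" for \<C>
  proof -
    have "subspace (\<Union>\<C>)" by (rule subspace_Union_chain[OF that]) (simp add: F_def)
    then show ?thesis
      using Union_chain_avoids_powers[OF assms(1,2) that[unfolded F_def]] by (simp add: F_def)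
  qed
  ultimately obtain P where P: "P \<in> F" and max: "\<And>Q. Q \<in> F \<Longrightarrow> P \<subseteq> Q \<Longrightarrow> Q = P"
    using subset_Zorn_nonempty[of F] by blast
  have "prime_submodule scale P"
    by (rule maximal_powers_avoiding_subspace_prime) (use P max in \<open>auto simp: F_def\<close>)
  then show ?thesis using P that by (simp add: F_def)
qed

lemma beta_module_subset_ideal_mult_radical_annihilator:
  assumes fg: "finitely_generated_module scale" and mult: "multiplication_module scale"
  shows "beta_module scale \<subseteq> ideal_mult scale (radical (annihilator scale))"
proof
  fix m assume m: "m \<in> beta_module scale"
  obtain I where I: "span {m} = ideal_mult scale I"
    using mult subspace_span unfolding multiplication_module_def by blast
  have "I \<subseteq> radical (annihilator scale)"
  proof
    fix c assume c: "c \<in> I"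
    show "c \<in> radical (annihilator scale)"
    proof (rule ccontr)
      assume "c \<notin> radical (annihilator scale)"
      then have "\<And>n. \<exists>x. (c ^ n) *s x \<noteq> 0"
        unfolding radical_def annihilator_def by blast
      moreover obtain S where "finite S" and "span S = UNIV"
        using fg unfolding finitely_generated_module_def by blast
      ultimately obtain P where P: "prime_submodule scale P"
          and avoids: "\<And>n. \<exists>x. (c ^ n) *s x \<notin> P"
        using exists_prime_submodule_avoiding_powers by blast
      have "span {m} \<subseteq> P"
        using m P span_minimal unfolding beta_module_def prime_submodule_def by blast
      moreover have "c *s x \<in> span {m}" for x
        using I c unfolding ideal_mult_def by (auto intro: span_base)
      ultimately show False using avoids[of 1] by auto
    qed
  qed
  then have "span {m} \<subseteq> ideal_mult scale (radical (annihilator scale))"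
    unfolding I ideal_mult_def by (intro span_mono) blast
  then show "m \<in> ideal_mult scale (radical (annihilator scale))"
    using span_base by blast
qed

end

theorem mainTheorem16:
  fixes sc :: "'a::comm_ring_1 \<Rightarrow> 'b::ab_group_add \<Rightarrow> 'b"
  assumes "module sc"
    and "finitely_generated_module sc"
    and "multiplication_module sc"
  shows "sum_submodules sc ((\<lambda>a. aGamma sc a) ` radical (annihilator sc)) = beta_module sc"
proof -
  interpret module sc by fact
  have "sum_submodules sc (aGamma sc ` radical (annihilator sc))
          = ideal_mult sc (radical (annihilator sc))"
    by (rule sum_submodules_aGamma_radical_annihilator)
  also have "\<dots> = beta_module sc"
    using ideal_mult_radical_annihilator_subset_beta_module
      beta_module_subset_ideal_mult_radical_annihilator[OF assms(2,3)] by blast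
  finally show ?thesis .
qed

end
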